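(* Let $O\rhd c_1$ and $O\rhd c_2$ be P-markings. Then $O\rhd c_1\sim_{C}O\rhd c_2$ if and only if $[O]_\cong\rhd c_1\alpha_O\sim_{AC}[O]_\cong\rhd c_2\alpha_O$.
   Context: Fix a set $Act$ of action labels and an infinite set $\mathcal{E}$ of event names. A finite $Act$-labelled poset (poset for short) is $O=(X_O,\preccurlyeq_O,l_O)$ with $X_O\subseteq\mathcal{E}$ finite, $\preccurlyeq_O$ a partial order on $X_O$, $l_O\colon X_O\to Act$; $|O|=\{(x,l_O(x)):x\in X_O\}$, $x_a$ denotes $(x,a)$, and $O$ is also regarded as a poset on $|O|$. A morphism is an order- and label-preserving map, acting on labelled events by $\sigma(x_a)=\sigma(x)_a$; an isomorphism is a bijective morphism with morphism inverse. For $K\subseteq|O|$, $\max_O K$ is its set of maximal elements; $K$ is down-closed if $y\in K$, $x\preccurlyeq_O y$ imply $x\in K$. A net $N=(S,T,F,l)$: disjoint sets $S,T$, $F\subseteq(S\times T)\cup(T\times S)$, $l\colon T\to Act$, ${}^\bullet t=\{s:(s,t)\in F\}$, $t^\bullet=\{s:(t,s)\in F\}$ nonempty. Fix $N$. A causal marking is a finite set $c$ of pairs $K\vdash s$ ($s\in S$, $K$ finite $\subseteq\mathcal{E}\times Act$); $\mathcal{K}(c)$ is the union of its cause sets, $|c|$ its set of places, $K\vdash m=\{K\vdash s:s\in m\}$, and $c\sigma=\{\sigma(K)\vdash s:K\vdash s\in c\}$. A P-marking $O\rhd c$: every cause set of $c$ is a down-closed subset of $|O|$. $\delta(O,K,e_a)$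 (for $K\subseteq|O|$, $e\notin X_O$) is $O$ plus the event $e$ with label $a$ above every element of $K$, reflexively-transitively closed. Concrete causal case graph (CG$_C$): smallest transition relation on P-markings with $O\rhd c\cup c'\xrightarrow{K\vdash e_a}\delta(O,K,e_a)\rhd(\mathcal{K}(c)\cup\{e_a\}\vdash t^\bullet)\cup c'$ whenever $t\in T$, $O\rhd c\cup c'$ is a P-marking, $|c|={}^\bullet t$, $a=l(t)$, $e\in\mathcal{E}\setminus X_O$, $K=\max_O\mathcal{K}(c)$. A concrete causal bisimulation is a family $\{R_O\}$ of relations on P-markings indexed by posets such that: if $(O_1\rhd c_1,O_2\rhd c_2)\in R_O$ then $O_1=O_2=O$; and if $(O\rhd c_1,O\rhd c_2)\in R_O$ and $O\rhd c_1\xrightarrow{K\vdash e_a}O'\rhd c_1'$ then $O\rhd c_2\xrightarrow{K\vdash e_a}O'\rhd c_2'$ for some $c_2'$ with $(O'\rhd c_1',O'\rhd c_2')\in R_{O'}$, and vice versa. $\sim_C$ is the greatest one. Abstract setting: for each poset $O$ fix a canonical representative $[O]_\cong$ of its isomorphism class and an isomorphism $\alpha_O\colon O\to[O]_\cong$; $O$ is abstract if $[O]_\cong=O$, and an abstract P-marking is one whose poset is abstract. For abstract $O$, $K\subseteq|O|$, $a\in Act$: $\delta(O,K,a)=[\delta(O,K,e_a)]_\cong$ (any $e\notin X_O$), $new(O,K,a)$ is the element of $\delta(O,K,a)$ corresponding to the added event and $old(O,K,a)\colon O\to\delta(O,K,a)$ the embedding corresponding to the inclusion of $O$ (fixed choices).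 For a CG$_C$ transition $O\rhd c\xrightarrow{K\vdash e_a}\delta(O,K,e_a)\rhd c'$, let $c'_{O,K,e_a}$ be $c'$ renamed by the isomorphism $\delta(O,K,e_a)\to\delta([O]_\cong,\alpha_O(K),a)$ sending $x\in X_O$ to $old([O]_\cong,\alpha_O(K),a)(\alpha_O(x))$ and $e_a$ to $new([O]_\cong,\alpha_O(K),a)$. The abstract causal case graph (CG$_{AC}$) has a transition $[O]_\cong\rhd c\alpha_O\stackrel{\alpha_O(K)\vdash a}{\Longrightarrow}\delta([O]_\cong,\alpha_O(K),a)\rhd c'_{O,K,e_a}$ for each such CG$_C$ transition. An abstract causal bisimulation is a family $\{R_O\}$ indexed by abstract posets of relations on abstract P-markings such that: $(O_1\rhd c_1,O_2\rhd c_2)\in R_O$ implies $O_1=O_2=O$; and if $(O\rhd c_1,O\rhd c_2)\in R_O$ and $O\rhd c_1\stackrel{K\vdash a}{\Longrightarrow}O'\rhd c_1'$ then $O\rhd c_2\stackrel{K\vdash a}{\Longrightarrow}O'\rhd c_2'$ with $(O'\rhd c_1',O'\rhd c_2')\in R_{O'}$, and vice versa. $\sim_{AC}$ is the greatest one. *)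

theory Defs
  imports Main
begin

text \<open>A finite Act-labelled poset is represented by its set of labelled events |Q|
  (pairs (x,a), at most one label per event name) together with its order on |Q|.\<close>

type_synonym ('e,'a) poset = "('e \<times> 'a) set \<times> (('e \<times> 'a) \<times> ('e \<times> 'a)) set"

definition evs :: "('e,'a) poset \<Rightarrow> ('e \<times> 'a) set" where
  "evs Q = fst Q"

definition ordr :: "('e,'a) poset \<Rightarrow> (('e \<times> 'a) \<times> ('e \<times> 'a)) set" where
  "ordr Q = snd Q"

definition names :: "('e,'a) poset \<Rightarrow> 'e set" where
  "names Q = fst ` evs Q"

definition wf_poset :: "('e,'a) poset \<Rightarrow> bool" where
  "wf_poset Q \<longleftrightarrow> finite (evs Q) \<and> inj_on fst (evs Q)
     \<and> ordr Q \<subseteq> evs Q \<times> evs Q \<and> partial_order_on (evs Q) (ordr Q)"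

definition lift :: "('e \<Rightarrow> 'e) \<Rightarrow> 'e \<times> 'a \<Rightarrow> 'e \<times> 'a" where
  "lift \<sigma> p = (\<sigma> (fst p), snd p)"

definition morphism :: "('e \<Rightarrow> 'e) \<Rightarrow> ('e,'a) poset \<Rightarrow> ('e,'a) poset \<Rightarrow> bool" where
  "morphism \<sigma> Q Q' \<longleftrightarrow> (\<forall>p\<in>evs Q. lift \<sigma> p \<in> evs Q')
     \<and> (\<forall>(p,q)\<in>ordr Q. (lift \<sigma> p, lift \<sigma> q) \<in> ordr Q')"

definition iso :: "('e \<Rightarrow> 'e) \<Rightarrow> ('e,'a) poset \<Rightarrow> ('e,'a) poset \<Rightarrow> bool" where
  "iso \<sigma> Q Q' \<longleftrightarrow> bij_betw \<sigma> (names Q) (names Q') \<and> morphism \<sigma> Q Q'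
     \<and> morphism (inv_into (names Q) \<sigma>) Q' Q"

definition maxO :: "('e,'a) poset \<Rightarrow> ('e \<times> 'a) set \<Rightarrow> ('e \<times> 'a) set" where
  "maxO Q K = {k \<in> K. \<not> (\<exists>k'\<in>K. (k, k') \<in> ordr Q \<and> k \<noteq> k')}"

definition down_closed :: "('e,'a) poset \<Rightarrow> ('e \<times> 'a) set \<Rightarrow> bool" where
  "down_closed Q K \<longleftrightarrow> K \<subseteq> evs Q \<and> (\<forall>y\<in>K. \<forall>x. (x, y) \<in> ordr Q \<longrightarrow> x \<in> K)"

definition delta :: "('e,'a) poset \<Rightarrow> ('e \<times> 'a) set \<Rightarrow> 'e \<Rightarrow> 'a \<Rightarrow> ('e,'a) poset" where
  "delta Q K e a =
     (let E' = insert (e, a) (evs Q)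
      in (E', Id_on E' \<union> (ordr Q \<union> K \<times> {(e, a)})\<^sup>+))"

definition preset :: "('n \<times> 'n) set \<Rightarrow> 'n \<Rightarrow> 'n set" where
  "preset F t = {s. (s, t) \<in> F}"

definition postset :: "('n \<times> 'n) set \<Rightarrow> 'n \<Rightarrow> 'n set" where
  "postset F t = {s. (t, s) \<in> F}"

definition is_net :: "'n set \<Rightarrow> 'n set \<Rightarrow> ('n \<times> 'n) set \<Rightarrow> bool" where
  "is_net S T F \<longleftrightarrow> S \<inter> T = {} \<and> F \<subseteq> (S \<times> T) \<union> (T \<times> S)
     \<and> (\<forall>t\<in>T. preset F t \<noteq> {} \<and> postset F t \<noteq> {})"

type_synonym ('e,'a,'n) cmarking = "(('e \<times> 'a) set \<times> 'n) set"

definition causal_marking :: "'n set \<Rightarrow> ('e,'a,'n) cmarking \<Rightarrow> bool" where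
  "causal_marking S c \<longleftrightarrow> finite c \<and> (\<forall>(K, s)\<in>c. finite K \<and> s \<in> S)"

definition causes :: "('e,'a,'n) cmarking \<Rightarrow> ('e \<times> 'a) set" where
  "causes c = (\<Union>(K, s)\<in>c. K)"

definition places :: "('e,'a,'n) cmarking \<Rightarrow> 'n set" where
  "places c = snd ` c"

definition rename :: "('e,'a,'n) cmarking \<Rightarrow> ('e \<Rightarrow> 'e) \<Rightarrow> ('e,'a,'n) cmarking" where
  "rename c \<sigma> = (\<lambda>(K, s). (lift \<sigma> ` K, s)) ` c"

definition pmarking :: "'n set \<Rightarrow> ('e,'a) poset \<Rightarrow> ('e,'a,'n) cmarking \<Rightarrow> bool" where
  "pmarking S Q c \<longleftrightarrow> wf_poset Q \<and> causal_marking S c \<and> (\<forall>(K, s)\<in>c. down_closed Q K)"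

definition stepC ::
  "'n set \<Rightarrow> 'n set \<Rightarrow> ('n \<times> 'n) set \<Rightarrow> ('n \<Rightarrow> 'a) \<Rightarrow>
   ('e,'a) poset \<Rightarrow> ('e,'a,'n) cmarking \<Rightarrow> ('e \<times> 'a) set \<times> 'e \<times> 'a \<Rightarrow>
   ('e,'a) poset \<Rightarrow> ('e,'a,'n) cmarking \<Rightarrow> bool" where
  "stepC S T F l Q c0 lab Q' c0' \<longleftrightarrow>
     (\<exists>t c c' e a K. t \<in> T \<and> pmarking S Q c0 \<and> c0 = c \<union> c' \<and> places c = preset F t
        \<and> a = l t \<and> e \<notin> names Q \<and> K = maxO Q (causes c) \<and> lab = (K, e, a)
        \<and> Q' = delta Q K e a
        \<and> c0' = {(causes c \<union> {(e, a)}, s) | s. s \<in> postset F t} \<union> c'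
        \<and> pmarking S Q' c0')"

definition bisimC ::
  "'n set \<Rightarrow> 'n set \<Rightarrow> ('n \<times> 'n) set \<Rightarrow> ('n \<Rightarrow> 'a) \<Rightarrow>
   (('e,'a) poset \<Rightarrow> (('e,'a,'n) cmarking \<times> ('e,'a,'n) cmarking) set) \<Rightarrow> bool" where
  "bisimC S T F l R \<longleftrightarrow>
     (\<forall>Q c1 c2. (c1, c2) \<in> R Q \<longrightarrow>
        pmarking S Q c1 \<and> pmarking S Q c2
        \<and> (\<forall>lab Q' c1'. stepC S T F l Q c1 lab Q' c1' \<longrightarrow>
             (\<exists>c2'. stepC S T F l Q c2 lab Q' c2' \<and> (c1', c2') \<in> R Q'))
        \<and> (\<forall>lab Q' c2'. stepC S T F l Q c2 lab Q' c2' \<longrightarrow>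
             (\<exists>c1'. stepC S T F l Q c1 lab Q' c1' \<and> (c1', c2') \<in> R Q')))"

definition simC ::
  "'n set \<Rightarrow> 'n set \<Rightarrow> ('n \<times> 'n) set \<Rightarrow> ('n \<Rightarrow> 'a) \<Rightarrow>
   ('e,'a) poset \<Rightarrow> ('e,'a,'n) cmarking \<Rightarrow> ('e,'a,'n) cmarking \<Rightarrow> bool" where
  "simC S T F l Q c1 c2 \<longleftrightarrow> (\<exists>R. bisimC S T F l R \<and> (c1, c2) \<in> R Q)"

definition delta_abs ::
  "(('e,'a) poset \<Rightarrow> ('e,'a) poset) \<Rightarrow> ('e,'a) poset \<Rightarrow> ('e \<times> 'a) set \<Rightarrow> 'a \<Rightarrow> ('e,'a) poset" where
  "delta_abs canon Q K a = canon (delta Q K (SOME e. e \<notin> names Q) a)"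

text \<open>canon Q = [Q], alpha Q = alpha_O : Q -> [Q], newf Q K a = new(Q,K,a) (the event name;
  its label is a), oldf Q K a = old(Q,K,a).\<close>
definition abstract_setting ::
  "(('e,'a) poset \<Rightarrow> ('e,'a) poset) \<Rightarrow> (('e,'a) poset \<Rightarrow> 'e \<Rightarrow> 'e) \<Rightarrow>
   (('e,'a) poset \<Rightarrow> ('e \<times> 'a) set \<Rightarrow> 'a \<Rightarrow> 'e) \<Rightarrow>
   (('e,'a) poset \<Rightarrow> ('e \<times> 'a) set \<Rightarrow> 'a \<Rightarrow> 'e \<Rightarrow> 'e) \<Rightarrow> bool" where
  "abstract_setting canon alpha newf oldf \<longleftrightarrow>
     (\<forall>Q. wf_poset Q \<longrightarrow> wf_poset (canon Q) \<and> iso (alpha Q) Q (canon Q))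
   \<and> (\<forall>Q Q'. wf_poset Q \<and> wf_poset Q' \<longrightarrow> (canon Q = canon Q' \<longleftrightarrow> (\<exists>\<sigma>. iso \<sigma> Q Q')))
   \<and> (\<forall>Q K a e. wf_poset Q \<and> canon Q = Q \<and> K \<subseteq> evs Q \<and> e \<notin> names Q \<longrightarrow>
        iso ((oldf Q K a)(e := newf Q K a)) (delta Q K e a) (delta_abs canon Q K a))"

definition stepAC ::
  "'n set \<Rightarrow> 'n set \<Rightarrow> ('n \<times> 'n) set \<Rightarrow> ('n \<Rightarrow> 'a) \<Rightarrow>
   (('e,'a) poset \<Rightarrow> ('e,'a) poset) \<Rightarrow> (('e,'a) poset \<Rightarrow> 'e \<Rightarrow> 'e) \<Rightarrow>
   (('e,'a) poset \<Rightarrow> ('e \<times> 'a) set \<Rightarrow> 'a \<Rightarrow> 'e) \<Rightarrow>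
   (('e,'a) poset \<Rightarrow> ('e \<times> 'a) set \<Rightarrow> 'a \<Rightarrow> 'e \<Rightarrow> 'e) \<Rightarrow>
   ('e,'a) poset \<Rightarrow> ('e,'a,'n) cmarking \<Rightarrow> ('e \<times> 'a) set \<times> 'a \<Rightarrow>
   ('e,'a) poset \<Rightarrow> ('e,'a,'n) cmarking \<Rightarrow> bool" where
  "stepAC S T F l canon alpha newf oldf P c lab P' c' \<longleftrightarrow>
     (\<exists>Q c0 K e a O1 c1. stepC S T F l Q c0 (K, e, a) O1 c1
        \<and> P = canon Q \<and> c = rename c0 (alpha Q)
        \<and> lab = (lift (alpha Q) ` K, a)
        \<and> P' = delta_abs canon (canon Q) (lift (alpha Q) ` K) a
        \<and> c' = rename c1 ((oldf (canon Q) (lift (alpha Q) ` K) a \<circ> alpha Q)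
                          (e := newf (canon Q) (lift (alpha Q) ` K) a)))"

definition bisimAC ::
  "'n set \<Rightarrow> 'n set \<Rightarrow> ('n \<times> 'n) set \<Rightarrow> ('n \<Rightarrow> 'a) \<Rightarrow>
   (('e,'a) poset \<Rightarrow> ('e,'a) poset) \<Rightarrow> (('e,'a) poset \<Rightarrow> 'e \<Rightarrow> 'e) \<Rightarrow>
   (('e,'a) poset \<Rightarrow> ('e \<times> 'a) set \<Rightarrow> 'a \<Rightarrow> 'e) \<Rightarrow>
   (('e,'a) poset \<Rightarrow> ('e \<times> 'a) set \<Rightarrow> 'a \<Rightarrow> 'e \<Rightarrow> 'e) \<Rightarrow>
   (('e,'a) poset \<Rightarrow> (('e,'a,'n) cmarking \<times> ('e,'a,'n) cmarking) set) \<Rightarrow> bool" where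
  "bisimAC S T F l canon alpha newf oldf R \<longleftrightarrow>
     (\<forall>Q c1 c2. (c1, c2) \<in> R Q \<longrightarrow>
        canon Q = Q \<and> pmarking S Q c1 \<and> pmarking S Q c2
        \<and> (\<forall>lab Q' c1'. stepAC S T F l canon alpha newf oldf Q c1 lab Q' c1' \<longrightarrow>
             (\<exists>c2'. stepAC S T F l canon alpha newf oldf Q c2 lab Q' c2' \<and> (c1', c2') \<in> R Q'))
        \<and> (\<forall>lab Q' c2'. stepAC S T F l canon alpha newf oldf Q c2 lab Q' c2' \<longrightarrow>
             (\<exists>c1'. stepAC S T F l canon alpha newf oldf Q c1 lab Q' c1' \<and> (c1', c2') \<in> R Q')))"

definition simAC ::
  "'n set \<Rightarrow> 'n set \<Rightarrow> ('n \<times> 'n) set \<Rightarrow> ('n \<Rightarrow> 'a) \<Rightarrow>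
   (('e,'a) poset \<Rightarrow> ('e,'a) poset) \<Rightarrow> (('e,'a) poset \<Rightarrow> 'e \<Rightarrow> 'e) \<Rightarrow>
   (('e,'a) poset \<Rightarrow> ('e \<times> 'a) set \<Rightarrow> 'a \<Rightarrow> 'e) \<Rightarrow>
   (('e,'a) poset \<Rightarrow> ('e \<times> 'a) set \<Rightarrow> 'a \<Rightarrow> 'e \<Rightarrow> 'e) \<Rightarrow>
   ('e,'a) poset \<Rightarrow> ('e,'a,'n) cmarking \<Rightarrow> ('e,'a,'n) cmarking \<Rightarrow> bool" where
  "simAC S T F l canon alpha newf oldf Q c1 c2 \<longleftrightarrow>
     (\<exists>R. bisimAC S T F l canon alpha newf oldf R \<and> (c1, c2) \<in> R Q)"

end

theory Submission
  imports Defs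
begin

text \<open>
  Renaming events along an injection sends transitions of the concrete causal case graph to
  transitions, and, since the new event may be given any fresh name (there are infinitely many),
  every transition of a renamed P-marking arises in this way. Hence concrete causal bisimilarity is
  invariant under poset isomorphisms. An abstract transition is a concrete one transported to the
  canonical representative, with its target renamed along the isomorphism onto
  delta([O],alpha_O(K),a) given by old and new. So concrete bisimilarity restricted to abstract
  posets is an abstract bisimulation; conversely, relating two P-markings whenever some isomorphism
  onto an abstract poset carries them to abstractly bisimilar ones gives a concrete bisimulation.
\<close>

definition rename_poset :: "('e,'a) poset \<Rightarrow> ('e \<Rightarrow> 'e) \<Rightarrow> ('e,'a) poset" where
  "rename_poset Q \<sigma> = (lift \<sigma> ` evs Q, map_prod (lift \<sigma>) (lift \<sigma>) ` ordr Q)"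

lemma evs_rename_poset [simp]: "evs (rename_poset Q \<sigma>) = lift \<sigma> ` evs Q"
  by (simp add: rename_poset_def evs_def)

lemma ordr_rename_poset [simp]: "ordr (rename_poset Q \<sigma>) = map_prod (lift \<sigma>) (lift \<sigma>) ` ordr Q"
  by (simp add: rename_poset_def ordr_def)

lemma fst_lift [simp]: "fst (lift \<sigma> p) = \<sigma> (fst p)"
  by (simp add: lift_def)

lemma snd_lift [simp]: "snd (lift \<sigma> p) = snd p"
  by (simp add: lift_def)

lemma lift_Pair: "lift \<sigma> (x, b) = (\<sigma> x, b)"
  by (simp add: lift_def)

lemma lift_id [simp]: "lift id = id"
  by (simp add: lift_def fun_eq_iff)

lemma lift_comp: "lift \<tau> (lift \<sigma> p) = lift (\<tau> \<circ> \<sigma>) p"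
  by (simp add: lift_def)

lemma image_lift_comp: "lift \<tau> ` lift \<sigma> ` K = lift (\<tau> \<circ> \<sigma>) ` K"
  by (simp add: image_image lift_comp)

lemma names_rename_poset [simp]: "names (rename_poset Q \<sigma>) = \<sigma> ` names Q"
  by (auto simp: names_def image_image)

lemma fst_in_names: "p \<in> evs Q \<Longrightarrow> fst p \<in> names Q"
  by (simp add: names_def)

lemma poset_eqI: "evs Q = evs Q' \<Longrightarrow> ordr Q = ordr Q' \<Longrightarrow> Q = Q'"
  by (metis evs_def ordr_def prod.expand)

lemma ordr_subset: "wf_poset Q \<Longrightarrow> ordr Q \<subseteq> evs Q \<times> evs Q"
  by (simp add: wf_poset_def)

lemma finite_names: "wf_poset Q \<Longrightarrow> finite (names Q)"
  by (simp add: wf_poset_def names_def)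

lemma ex_fresh_name:
  "infinite (UNIV :: 'e set) \<Longrightarrow> wf_poset (Q :: ('e,'a) poset) \<Longrightarrow> \<exists>e. e \<notin> names Q"
  using ex_new_if_finite finite_names by blast

lemma rename_poset_id [simp]: "rename_poset Q id = Q"
  by (rule poset_eqI) (simp_all add: prod.map_id0)

lemma rename_poset_comp: "rename_poset (rename_poset Q \<sigma>) \<tau> = rename_poset Q (\<tau> \<circ> \<sigma>)"
  by (rule poset_eqI) (auto simp: image_image lift_comp map_prod_def split_def)

lemma rename_id [simp]: "rename c id = c"
  by (simp add: rename_def case_prod_Pair_iden)

lemma rename_comp: "rename (rename c \<sigma>) \<tau> = rename c (\<tau> \<circ> \<sigma>)"
  by (auto simp: rename_def image_image lift_comp split_def)

lemma lift_cong: "p \<in> evs Q \<Longrightarrow> \<forall>x\<in>names Q. \<sigma> x = \<sigma>' x \<Longrightarrow> lift \<sigma> p = lift \<sigma>' p"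
  by (simp add: lift_def fst_in_names)

lemma image_lift_cong:
  "K \<subseteq> evs Q \<Longrightarrow> \<forall>x\<in>names Q. \<sigma> x = \<sigma>' x \<Longrightarrow> lift \<sigma> ` K = lift \<sigma>' ` K"
  by (intro image_cong refl lift_cong) auto

lemma rename_poset_cong:
  assumes "wf_poset Q" "\<forall>x\<in>names Q. \<sigma> x = \<sigma>' x"
  shows "rename_poset Q \<sigma> = rename_poset Q \<sigma>'"
proof (rule poset_eqI)
  show "evs (rename_poset Q \<sigma>) = evs (rename_poset Q \<sigma>')"
    using image_lift_cong[OF order.refl assms(2)] by simp
  have "\<And>p q. (p, q) \<in> ordr Q \<Longrightarrow> lift \<sigma> p = lift \<sigma>' p \<and> lift \<sigma> q = lift \<sigma>' q"
    using assms ordr_subset lift_cong by blast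
  then show "ordr (rename_poset Q \<sigma>) = ordr (rename_poset Q \<sigma>')"
    by (force simp: image_iff)
qed

lemma rename_poset_id_on: "wf_poset Q \<Longrightarrow> \<forall>x\<in>names Q. \<sigma> x = x \<Longrightarrow> rename_poset Q \<sigma> = Q"
  using rename_poset_cong[of Q \<sigma> id] by simp

lemma causes_subset_evs: "pmarking S Q c \<Longrightarrow> (K, s) \<in> c \<Longrightarrow> K \<subseteq> evs Q"
  by (auto simp: pmarking_def down_closed_def)

lemma rename_cong:
  assumes "pmarking S Q c" "\<forall>x\<in>names Q. \<sigma> x = \<sigma>' x"
  shows "rename c \<sigma> = rename c \<sigma>'"
proof -
  have "lift \<sigma> ` K = lift \<sigma>' ` K" if "(K, s) \<in> c" for K s
    using image_lift_cong[OF causes_subset_evs[OF assms(1) that] assms(2)] .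
  then show ?thesis
    unfolding rename_def by (intro image_cong refl) (clarsimp split: prod.splits)
qed

lemma rename_id_on: "pmarking S Q c \<Longrightarrow> \<forall>x\<in>names Q. \<sigma> x = x \<Longrightarrow> rename c \<sigma> = c"
  using rename_cong[of S Q c \<sigma> id] by simp

lemma inj_on_lift: "inj_on \<sigma> (names Q) \<Longrightarrow> wf_poset Q \<Longrightarrow> inj_on (lift \<sigma>) (evs Q)"
  unfolding inj_on_def wf_poset_def by (metis fst_lift fst_in_names snd_lift prod.expand)

lemma trancl_map_prod_image:
  assumes inj: "inj_on f A" and r: "r \<subseteq> A \<times> A"
  shows "(map_prod f f ` r)\<^sup>+ = map_prod f f ` (r\<^sup>+)"
proof
  show "map_prod f f ` (r\<^sup>+) \<subseteq> (map_prod f f ` r)\<^sup>+"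
  proof clarify
    fix a b assume "(a, b) \<in> r\<^sup>+"
    then show "(f a, f b) \<in> (map_prod f f ` r)\<^sup>+"
    proof (induction rule: trancl_induct)
      case (base y)
      then show ?case by (intro r_into_trancl) (force simp: image_iff)
    next
      case (step y z)
      then have "(f y, f z) \<in> map_prod f f ` r" by (force simp: image_iff)
      with step.IH show ?case by (meson trancl.trancl_into_trancl)
    qed
  qed
  have rA: "r\<^sup>+ \<subseteq> A \<times> A" using r trancl_subset_Sigma by blast
  show "(map_prod f f ` r)\<^sup>+ \<subseteq> map_prod f f ` (r\<^sup>+)"
  proof clarify
    fix x y assume "(x, y) \<in> (map_prod f f ` r)\<^sup>+"
    then show "(x, y) \<in> map_prod f f ` (r\<^sup>+)"
    proof (induction rule: trancl_induct)
      case (base y)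
      then show ?case by auto
    next
      case (step y z)
      from step.IH obtain a b where ab: "(a, b) \<in> r\<^sup>+" "x = f a" "y = f b" by auto
      from step.hyps(2) obtain b' c where bc: "(b', c) \<in> r" "y = f b'" "z = f c" by auto
      have "b = b'" using ab bc rA r inj by (auto simp: inj_on_def)
      with ab bc have "(a, c) \<in> r\<^sup>+" by auto
      with ab bc show ?case by force
    qed
  qed
qed

lemma wf_rename_poset:
  assumes wf: "wf_poset Q" and inj: "inj_on \<sigma> (names Q)"
  shows "wf_poset (rename_poset Q \<sigma>)"
proof -
  let ?f = "lift \<sigma>"
  have injf: "inj_on ?f (evs Q)" using inj_on_lift[OF inj wf] .
  have po: "partial_order_on (evs Q) (ordr Q)" and sub: "ordr Q \<subseteq> evs Q \<times> evs Q"
    using wf by (auto simp: wf_poset_def)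
  have "inj_on fst (?f ` evs Q)"
  proof (rule inj_on_imageI)
    have "inj_on (\<sigma> \<circ> fst) (evs Q)"
      using wf inj by (intro comp_inj_on) (auto simp: wf_poset_def names_def)
    moreover have "\<sigma> \<circ> fst = fst \<circ> lift \<sigma>" by auto
    ultimately show "inj_on (fst \<circ> lift \<sigma>) (evs Q)" by metis
  qed
  moreover have "refl_on (?f ` evs Q) (map_prod ?f ?f ` ordr Q)"
    using po unfolding partial_order_on_def preorder_on_def refl_on_def by force
  moreover have "trans (map_prod ?f ?f ` ordr Q)"
  proof (rule transI)
    fix x y z
    assume "(x, y) \<in> map_prod ?f ?f ` ordr Q" "(y, z) \<in> map_prod ?f ?f ` ordr Q"
    then obtain a b c d where "(a, b) \<in> ordr Q" "(c, d) \<in> ordr Q"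
      and "x = ?f a" "y = ?f b" "y = ?f c" "z = ?f d" by auto
    moreover from this have "b = c" using sub injf by (auto simp: inj_on_def)
    ultimately show "(x, z) \<in> map_prod ?f ?f ` ordr Q"
      using po unfolding partial_order_on_def preorder_on_def by (force dest: transD)
  qed
  moreover have "antisym (map_prod ?f ?f ` ordr Q)"
  proof (rule antisymI)
    fix x y
    assume "(x, y) \<in> map_prod ?f ?f ` ordr Q" "(y, x) \<in> map_prod ?f ?f ` ordr Q"
    then obtain a b c d where "(a, b) \<in> ordr Q" "(c, d) \<in> ordr Q"
      and "x = ?f a" "y = ?f b" "y = ?f c" "x = ?f d" by auto
    moreover from this have "b = c" "a = d" using sub injf by (auto simp: inj_on_def)
    ultimately show "x = y"
      using po unfolding partial_order_on_def by (metis antisymD)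
  qed
  ultimately show ?thesis
    using wf sub by (auto simp: wf_poset_def partial_order_on_def preorder_on_def)
qed

lemma down_closed_rename_poset:
  assumes wf: "wf_poset Q" and inj: "inj_on \<sigma> (names Q)" and dc: "down_closed Q K"
  shows "down_closed (rename_poset Q \<sigma>) (lift \<sigma> ` K)"
  unfolding down_closed_def
proof (intro conjI ballI allI impI)
  show "lift \<sigma> ` K \<subseteq> evs (rename_poset Q \<sigma>)" using dc by (auto simp: down_closed_def)
next
  fix y x assume "y \<in> lift \<sigma> ` K" and "(x, y) \<in> ordr (rename_poset Q \<sigma>)"
  then obtain y0 a b where "y0 \<in> K" "y = lift \<sigma> y0" "(a, b) \<in> ordr Q" "x = lift \<sigma> a" "y = lift \<sigma> b"
    by auto
  moreover from this have "b = y0"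
    using ordr_subset[OF wf] dc inj_on_lift[OF inj wf] by (auto simp: inj_on_def down_closed_def)
  ultimately show "x \<in> lift \<sigma> ` K" using dc unfolding down_closed_def by blast
qed

lemma pmarking_rename:
  assumes pm: "pmarking S Q c" and inj: "inj_on \<sigma> (names Q)"
  shows "pmarking S (rename_poset Q \<sigma>) (rename c \<sigma>)"
  using pm wf_rename_poset[OF _ inj] down_closed_rename_poset[OF _ inj]
  by (fastforce simp: pmarking_def causal_marking_def rename_def)

lemma iso_imp_rename_poset:
  assumes wf: "wf_poset Q" "wf_poset Q'" and iso: "iso \<sigma> Q Q'"
  shows "Q' = rename_poset Q \<sigma>" "inj_on \<sigma> (names Q)"
proof -
  let ?\<tau> = "inv_into (names Q) \<sigma>"
  have bij: "bij_betw \<sigma> (names Q) (names Q')"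
    and m1: "morphism \<sigma> Q Q'" and m2: "morphism ?\<tau> Q' Q"
    using iso by (auto simp: iso_def)
  show "inj_on \<sigma> (names Q)" using bij by (simp add: bij_betw_def)
  have right_inverse: "lift \<sigma> (lift ?\<tau> p) = p" if "p \<in> evs Q'" for p
  proof -
    have "fst p \<in> \<sigma> ` names Q" using that bij by (simp add: bij_betw_def fst_in_names)
    then show ?thesis by (simp add: lift_def f_inv_into_f)
  qed
  show "Q' = rename_poset Q \<sigma>"
  proof (rule poset_eqI)
    have "p \<in> lift \<sigma> ` evs Q" if "p \<in> evs Q'" for p
      using that m2 right_inverse[OF that] by (metis image_eqI morphism_def)
    then show "evs Q' = evs (rename_poset Q \<sigma>)" using m1 by (auto simp: morphism_def)
    have "(p, q) \<in> map_prod (lift \<sigma>) (lift \<sigma>) ` ordr Q" if "(p, q) \<in> ordr Q'" for p q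
    proof -
      have "(lift ?\<tau> p, lift ?\<tau> q) \<in> ordr Q" using that m2 by (auto simp: morphism_def)
      moreover have "p \<in> evs Q'" "q \<in> evs Q'" using that ordr_subset[OF wf(2)] by auto
      ultimately show ?thesis using right_inverse by (metis map_prod_simp image_eqI)
    qed
    then show "ordr Q' = ordr (rename_poset Q \<sigma>)" using m1 by (auto simp: morphism_def)
  qed
qed

lemma evs_delta: "evs (delta Q K e a) = insert (e, a) (evs Q)"
  by (simp add: delta_def evs_def Let_def)

lemma ordr_delta:
  "ordr (delta Q K e a) = Id_on (insert (e, a) (evs Q)) \<union> (ordr Q \<union> K \<times> {(e, a)})\<^sup>+"
  by (simp add: delta_def ordr_def Let_def)

lemma names_delta [simp]: "names (delta Q K e a) = insert e (names Q)"
  by (simp add: names_def evs_delta)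

lemma rename_poset_delta:
  assumes wf: "wf_poset Q" and K: "K \<subseteq> evs Q" and e: "e \<notin> names Q"
    and inj: "inj_on \<sigma> (insert e (names Q))"
  shows "rename_poset (delta Q K e a) \<sigma> = delta (rename_poset Q \<sigma>) (lift \<sigma> ` K) (\<sigma> e) a"
proof -
  let ?f = "lift \<sigma>" and ?A = "insert (e, a) (evs Q)"
  have "inj_on (\<sigma> \<circ> fst) ?A"
  proof (rule comp_inj_on)
    show "inj_on fst ?A" using wf e by (force simp: wf_poset_def names_def inj_on_def)
    show "inj_on \<sigma> (fst ` ?A)" using inj by (simp add: names_def)
  qed
  then have injf: "inj_on ?f ?A" unfolding inj_on_def by (metis comp_apply fst_lift snd_lift prod.expand)
  have r: "ordr Q \<union> K \<times> {(e, a)} \<subseteq> ?A \<times> ?A" using wf K by (auto simp: wf_poset_def)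
  have Id_on_image: "map_prod g g ` Id_on B = Id_on (g ` B)" for g B
    by (auto simp: Id_on_def image_iff)
  have "map_prod ?f ?f ` Id_on ?A = Id_on (insert (\<sigma> e, a) (?f ` evs Q))"
    using Id_on_image[of ?f ?A] by (simp add: lift_Pair)
  moreover have "map_prod ?f ?f ` (K \<times> {(e, a)}) = ?f ` K \<times> {(\<sigma> e, a)}"
    by (force simp: lift_Pair)
  ultimately show ?thesis
    by (intro poset_eqI)
       (simp_all add: evs_delta ordr_delta image_Un lift_Pair
         trancl_map_prod_image[OF injf r, symmetric])
qed

lemma maxO_rename_poset:
  assumes wf: "wf_poset Q" and inj: "inj_on \<sigma> (names Q)" and K: "K \<subseteq> evs Q"
  shows "maxO (rename_poset Q \<sigma>) (lift \<sigma> ` K) = lift \<sigma> ` maxO Q K"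
proof -
  have injf: "inj_on (lift \<sigma>) (evs Q)" using inj_on_lift[OF inj wf] .
  have eq_iff: "lift \<sigma> k = lift \<sigma> k' \<longleftrightarrow> k = k'" if "k \<in> K" "k' \<in> K" for k k'
    using injf that K by (meson inj_on_eq_iff subsetD)
  have ordr_iff: "(lift \<sigma> k, lift \<sigma> k') \<in> ordr (rename_poset Q \<sigma>) \<longleftrightarrow> (k, k') \<in> ordr Q"
    if "k \<in> K" "k' \<in> K" for k k'
  proof
    assume "(lift \<sigma> k, lift \<sigma> k') \<in> ordr (rename_poset Q \<sigma>)"
    then obtain x y where "(x, y) \<in> ordr Q" "lift \<sigma> k = lift \<sigma> x" "lift \<sigma> k' = lift \<sigma> y" by auto
    moreover from this have "x = k" "y = k'"
      using that K ordr_subset[OF wf] injf by (auto dest: inj_onD)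
    ultimately show "(k, k') \<in> ordr Q" by simp
  qed auto
  show ?thesis
    unfolding maxO_def by (auto simp: ordr_iff eq_iff simp del: ordr_rename_poset)
qed

lemma causes_rename: "causes (rename c \<sigma>) = lift \<sigma> ` causes c"
  by (auto simp: causes_def rename_def)

lemma places_rename [simp]: "places (rename c \<sigma>) = places c"
  by (force simp: places_def rename_def image_iff)

lemma rename_Un: "rename (c \<union> c') \<sigma> = rename c \<sigma> \<union> rename c' \<sigma>"
  by (simp add: rename_def image_Un)

lemma stepC_D:
  assumes "stepC S T F l Q c (K, e, a) Q' c'"
  shows "pmarking S Q c" "pmarking S Q' c'" "e \<notin> names Q" "K \<subseteq> evs Q" "Q' = delta Q K e a"
proof -
  from assms obtain t c0 c1 where "pmarking S Q c" "c = c0 \<union> c1" "e \<notin> names Q"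
    "K = maxO Q (causes c0)" "Q' = delta Q K e a" "pmarking S Q' c'"
    unfolding stepC_def by blast
  moreover from this have "causes c0 \<subseteq> evs Q"
    unfolding causes_def by (auto dest: causes_subset_evs)
  ultimately show "pmarking S Q c" "pmarking S Q' c'" "e \<notin> names Q" "K \<subseteq> evs Q" "Q' = delta Q K e a"
    by (auto simp: maxO_def)
qed

lemma stepC_rename_inj:
  assumes step: "stepC S T F l Q c (K, e, a) Q' c'" and inj: "inj_on \<sigma> (insert e (names Q))"
  shows "stepC S T F l (rename_poset Q \<sigma>) (rename c \<sigma>) (lift \<sigma> ` K, \<sigma> e, a)
           (rename_poset Q' \<sigma>) (rename c' \<sigma>)"
proof -
  from step obtain t c0 c1 where t: "t \<in> T" and pm: "pmarking S Q c" and c: "c = c0 \<union> c1"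
    and pre: "places c0 = preset F t" and lab: "a = l t" and e: "e \<notin> names Q"
    and K: "K = maxO Q (causes c0)" and Q': "Q' = delta Q K e a"
    and c': "c' = {(causes c0 \<union> {(e, a)}, s) | s. s \<in> postset F t} \<union> c1"
    and pm': "pmarking S Q' c'"
    unfolding stepC_def by blast
  have wf: "wf_poset Q" using pm by (simp add: pmarking_def)
  have injQ: "inj_on \<sigma> (names Q)" using inj by (rule inj_on_subset) auto
  have causes: "causes c0 \<subseteq> evs Q"
    using pm c unfolding causes_def by (auto dest: causes_subset_evs)
  have Q'_image: "rename_poset Q' \<sigma> = delta (rename_poset Q \<sigma>) (lift \<sigma> ` K) (\<sigma> e) a"
    using rename_poset_delta[OF wf stepC_D(4)[OF step] e inj] Q' by simp
  have pm_image: "pmarking S (rename_poset Q \<sigma>) (rename c \<sigma>)"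
    using pmarking_rename[OF pm injQ] .
  have pm'_image: "pmarking S (rename_poset Q' \<sigma>) (rename c' \<sigma>)"
    using pmarking_rename[OF pm'] inj Q' by simp
  have c_image: "rename c \<sigma> = rename c0 \<sigma> \<union> rename c1 \<sigma>"
    using c by (simp add: rename_Un)
  have K_image: "lift \<sigma> ` K = maxO (rename_poset Q \<sigma>) (causes (rename c0 \<sigma>))"
    using maxO_rename_poset[OF wf injQ causes] K by (simp add: causes_rename)
  have c'_image: "rename c' \<sigma> =
      {(causes (rename c0 \<sigma>) \<union> {(\<sigma> e, a)}, s) | s. s \<in> postset F t} \<union> rename c1 \<sigma>"
    unfolding c' causes_rename by (auto simp: rename_def image_Un image_iff lift_Pair)
  have fresh: "\<sigma> e \<notin> names (rename_poset Q \<sigma>)"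
    using inj e by (auto simp: inj_on_def)
  show ?thesis
    unfolding stepC_def
    by (rule exI[of _ t], rule exI[of _ "rename c0 \<sigma>"], rule exI[of _ "rename c1 \<sigma>"],
        rule exI[of _ "\<sigma> e"], rule exI[of _ a], rule exI[of _ "lift \<sigma> ` K"])
       (use t pre lab pm_image pm'_image c_image K_image c'_image fresh Q'_image in auto)
qed

lemma stepC_rename:
  assumes step: "stepC S T F l Q c (K, e, a) Q' c'"
    and inj: "inj_on \<sigma> (names Q)" and fresh: "e' \<notin> \<sigma> ` names Q"
  shows "stepC S T F l (rename_poset Q \<sigma>) (rename c \<sigma>) (lift \<sigma> ` K, e', a)
           (rename_poset Q' (\<sigma>(e := e'))) (rename c' (\<sigma>(e := e')))"
proof -
  note step_facts = stepC_D[OF step]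
  have agree: "\<forall>x\<in>names Q. (\<sigma>(e := e')) x = \<sigma> x" using step_facts(3) by auto
  have wf: "wf_poset Q" using step_facts(1) by (simp add: pmarking_def)
  have "inj_on (\<sigma>(e := e')) (insert e (names Q))"
    using inj fresh step_facts(3) by (auto simp: inj_on_def)
  from stepC_rename_inj[OF step this] show ?thesis
    unfolding rename_poset_cong[OF wf agree] rename_cong[OF step_facts(1) agree]
      image_lift_cong[OF step_facts(4) agree] fun_upd_same .
qed

lemma stepC_reflect:
  assumes step: "stepC S T F l (rename_poset Q \<sigma>) (rename c \<sigma>) (K', e', a) Q' c'"
    and inj: "inj_on \<sigma> (names Q)" and pm: "pmarking S Q c" and fresh: "e \<notin> names Q"
  obtains K Q0 c0 where "stepC S T F l Q c (K, e, a) Q0 c0" "K' = lift \<sigma> ` K"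
    "Q' = rename_poset Q0 (\<sigma>(e := e'))" "c' = rename c0 (\<sigma>(e := e'))"
proof -
  define \<tau> where "\<tau> = inv_into (names Q) \<sigma>"
  have wf: "wf_poset Q" using pm by (simp add: pmarking_def)
  note step_facts = stepC_D[OF step]
  have \<tau>_\<sigma>: "\<tau> (\<sigma> x) = x" if "x \<in> names Q" for x
    using inj that by (simp add: \<tau>_def)
  have \<sigma>_\<tau>: "\<sigma> (\<tau> y) = y" and \<tau>_into: "\<tau> y \<in> names Q" if "y \<in> \<sigma> ` names Q" for y
    using that by (simp_all add: \<tau>_def f_inv_into_f inv_into_into)
  have "inj_on \<tau> (names (rename_poset Q \<sigma>))" by (simp add: \<tau>_def inj_on_inv_into)
  moreover have "e \<notin> \<tau> ` names (rename_poset Q \<sigma>)" using fresh \<tau>_into by auto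
  ultimately have "stepC S T F l (rename_poset (rename_poset Q \<sigma>) \<tau>) (rename (rename c \<sigma>) \<tau>)
      (lift \<tau> ` K', e, a) (rename_poset Q' (\<tau>(e' := e))) (rename c' (\<tau>(e' := e)))"
    by (rule stepC_rename[OF step])
  moreover have "rename_poset (rename_poset Q \<sigma>) \<tau> = Q"
    unfolding rename_poset_comp by (rule rename_poset_id_on[OF wf]) (simp add: \<tau>_\<sigma>)
  moreover have "rename (rename c \<sigma>) \<tau> = c"
    unfolding rename_comp by (rule rename_id_on[OF pm]) (simp add: \<tau>_\<sigma>)
  ultimately have step_back: "stepC S T F l Q c (lift \<tau> ` K', e, a)
      (rename_poset Q' (\<tau>(e' := e))) (rename c' (\<tau>(e' := e)))"
    by simp
  have round_trip: "\<forall>y\<in>names Q'. (\<sigma>(e := e') \<circ> \<tau>(e' := e)) y = y"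
    using step_facts(3,5) fresh \<sigma>_\<tau> \<tau>_into by auto
  have wf': "wf_poset Q'" using step_facts(2) by (simp add: pmarking_def)
  show ?thesis
  proof (rule that[OF step_back])
    have "lift (\<sigma> \<circ> \<tau>) ` K' = lift id ` K'"
      using image_lift_cong[OF step_facts(4), of "\<sigma> \<circ> \<tau>" id] \<sigma>_\<tau> by simp
    then show "K' = lift \<sigma> ` lift \<tau> ` K'" by (simp add: image_lift_comp)
    show "Q' = rename_poset (rename_poset Q' (\<tau>(e' := e))) (\<sigma>(e := e'))"
      unfolding rename_poset_comp rename_poset_id_on[OF wf' round_trip] ..
    show "c' = rename (rename c' (\<tau>(e' := e))) (\<sigma>(e := e'))"
      unfolding rename_comp rename_id_on[OF step_facts(2) round_trip] ..
  qed
qed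

lemma simC_pmarking: "simC S T F l Q c1 c2 \<Longrightarrow> pmarking S Q c1 \<and> pmarking S Q c2"
  unfolding simC_def bisimC_def by blast

lemma simC_match:
  "simC S T F l Q c1 c2 \<Longrightarrow> stepC S T F l Q c1 lab Q' c1' \<Longrightarrow>
   \<exists>c2'. stepC S T F l Q c2 lab Q' c2' \<and> simC S T F l Q' c1' c2'"
  unfolding simC_def bisimC_def by blast

lemma simC_sym: "simC S T F l Q c1 c2 \<Longrightarrow> simC S T F l Q c2 c1"
proof -
  assume "simC S T F l Q c1 c2"
  then obtain R where "bisimC S T F l R" "(c1, c2) \<in> R Q" unfolding simC_def by blast
  moreover from this have "bisimC S T F l (\<lambda>Q. (R Q)\<inverse>)" unfolding bisimC_def by fastforce
  ultimately show ?thesis unfolding simC_def by blast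
qed

lemma simC_coinduct:
  assumes "X Q c1 c2"
    and sym: "\<And>Q c1 c2. X Q c1 c2 \<Longrightarrow> X Q c2 c1"
    and pmarking: "\<And>Q c1 c2. X Q c1 c2 \<Longrightarrow> pmarking S Q c1"
    and step: "\<And>Q c1 c2 lab Q' c1'. X Q c1 c2 \<Longrightarrow> stepC S T F l Q c1 lab Q' c1' \<Longrightarrow>
       \<exists>c2'. stepC S T F l Q c2 lab Q' c2' \<and> X Q' c1' c2'"
  shows "simC S T F l Q c1 c2"
proof -
  have "bisimC S T F l (\<lambda>Q. {(c1, c2). X Q c1 c2})"
    unfolding bisimC_def using sym pmarking step by (simp (no_asm)) metis
  with assms(1) show ?thesis unfolding simC_def by blast
qed

lemma simC_rename:
  assumes inf: "infinite (UNIV :: 'e set)" and inj: "inj_on \<sigma> (names Q)"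
    and sim: "simC S T F l (Q :: ('e,'a) poset) c1 c2"
  shows "simC S T F l (rename_poset Q \<sigma>) (rename c1 \<sigma>) (rename c2 \<sigma>)"
proof -
  define X where "X Q' d1 d2 \<longleftrightarrow> (\<exists>Q \<sigma> c1 c2. inj_on \<sigma> (names Q) \<and> Q' = rename_poset Q \<sigma>
      \<and> d1 = rename c1 \<sigma> \<and> d2 = rename c2 \<sigma> \<and> simC S T F l (Q :: ('e,'a) poset) c1 c2)"
    for Q' d1 d2
  have sym: "X Q' d2 d1" if "X Q' d1 d2" for Q' d1 d2
    using that simC_sym unfolding X_def by blast
  have pmarking: "pmarking S Q' d1" if "X Q' d1 d2" for Q' d1 d2
    using that pmarking_rename simC_pmarking unfolding X_def by blast
  have step: "\<exists>d2'. stepC S T F l Q' d2 lab Q'' d2' \<and> X Q'' d1' d2'"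
    if "X Q' d1 d2" and step: "stepC S T F l Q' d1 lab Q'' d1'" for Q' d1 d2 lab Q'' d1'
  proof -
    from that(1) obtain Q \<sigma> c1 c2 where inj: "inj_on \<sigma> (names Q)" and Q': "Q' = rename_poset Q \<sigma>"
      and d: "d1 = rename c1 \<sigma>" "d2 = rename c2 \<sigma>" and sim: "simC S T F l Q c1 c2"
      unfolding X_def by blast
    obtain K' e' a where lab: "lab = (K', e', a)" by (cases lab)
    have pm: "pmarking S Q c1" using simC_pmarking[OF sim] by blast
    have "wf_poset Q" using pm by (simp add: pmarking_def)
    then obtain e where fresh: "e \<notin> names Q" using ex_fresh_name[OF inf] by blast
    have step1: "stepC S T F l (rename_poset Q \<sigma>) (rename c1 \<sigma>) (K', e', a) Q'' d1'"
      using step Q' d lab by simp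
    obtain K Q0 c0 where "stepC S T F l Q c1 (K, e, a) Q0 c0" and K': "K' = lift \<sigma> ` K"
      and Q'': "Q'' = rename_poset Q0 (\<sigma>(e := e'))" and d1': "d1' = rename c0 (\<sigma>(e := e'))"
      using stepC_reflect[OF step1 inj pm fresh] by blast
    with sim obtain c2' where step2: "stepC S T F l Q c2 (K, e, a) Q0 c2'"
      and sim': "simC S T F l Q0 c0 c2'"
      using simC_match by blast
    have fresh': "e' \<notin> \<sigma> ` names Q" using stepC_D(3)[OF step1] by simp
    have "stepC S T F l Q' d2 lab Q'' (rename c2' (\<sigma>(e := e')))"
      using stepC_rename[OF step2 inj fresh'] Q' d K' Q'' lab by simp
    moreover have "inj_on (\<sigma>(e := e')) (names Q0)"
      using inj fresh fresh' stepC_D(5)[OF step2] by (auto simp: inj_on_def)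
    ultimately show ?thesis unfolding X_def using Q'' d1' sim' by blast
  qed
  have "X (rename_poset Q \<sigma>) (rename c1 \<sigma>) (rename c2 \<sigma>)" using inj sim unfolding X_def by blast
  from simC_coinduct[of X, OF this sym pmarking step] show ?thesis .
qed

lemma canon_iso:
  assumes AS: "abstract_setting canon alpha newf oldf" and wf: "wf_poset Q"
  shows "wf_poset (canon Q)" "canon Q = rename_poset Q (alpha Q)" "inj_on (alpha Q) (names Q)"
proof -
  have "wf_poset (canon Q)" "iso (alpha Q) Q (canon Q)"
    using AS wf unfolding abstract_setting_def by blast+
  with iso_imp_rename_poset[OF wf] show
    "wf_poset (canon Q)" "canon Q = rename_poset Q (alpha Q)" "inj_on (alpha Q) (names Q)"
    by blast+
qed

lemma canon_idem:
  assumes AS: "abstract_setting canon alpha newf oldf" and wf: "wf_poset Q"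
  shows "canon (canon Q) = canon Q"
  using AS wf canon_iso(1)[OF AS wf] unfolding abstract_setting_def by metis

text \<open>For \<open>\<beta> = alpha Q\<close> this is the renaming turning c' into c'_{O,K,e_a} in \<open>stepAC\<close>.\<close>
definition ext_renaming ::
  "(('e,'a) poset \<Rightarrow> ('e \<times> 'a) set \<Rightarrow> 'a \<Rightarrow> 'e) \<Rightarrow>
   (('e,'a) poset \<Rightarrow> ('e \<times> 'a) set \<Rightarrow> 'a \<Rightarrow> 'e \<Rightarrow> 'e) \<Rightarrow>
   ('e,'a) poset \<Rightarrow> ('e \<times> 'a) set \<Rightarrow> 'a \<Rightarrow> ('e \<Rightarrow> 'e) \<Rightarrow> 'e \<Rightarrow> 'e \<Rightarrow> 'e" where
  "ext_renaming newf oldf P K a \<beta> e = (oldf P K a \<circ> \<beta>)(e := newf P K a)"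

lemma ext_renaming_comp:
  assumes "e \<notin> N" "e' \<notin> \<sigma> ` N" "\<forall>x\<in>N. \<gamma> (\<sigma> x) = \<beta> x" "x \<in> insert e N"
  shows "(ext_renaming newf oldf P K a \<gamma> e' \<circ> \<sigma>(e := e')) x = ext_renaming newf oldf P K a \<beta> e x"
  using assms by (auto simp: ext_renaming_def)

lemma delta_abs_eq_rename:
  assumes AS: "abstract_setting canon alpha newf oldf"
    and wf: "wf_poset P" and canon: "canon P = P" and K: "K \<subseteq> evs P" and e: "e \<notin> names P"
    and wf_delta: "wf_poset (delta P K e a)" and wf_abs: "wf_poset (delta_abs canon P K a)"
  shows "delta_abs canon P K a = rename_poset (delta P K e a) (ext_renaming newf oldf P K a id e)"
    and "inj_on (ext_renaming newf oldf P K a id e) (insert e (names P))"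
proof -
  have "iso ((oldf P K a)(e := newf P K a)) (delta P K e a) (delta_abs canon P K a)"
    using AS wf canon K e unfolding abstract_setting_def by blast
  then have "iso (ext_renaming newf oldf P K a id e) (delta P K e a) (delta_abs canon P K a)"
    by (simp add: ext_renaming_def)
  from iso_imp_rename_poset[OF wf_delta wf_abs this]
  show "delta_abs canon P K a = rename_poset (delta P K e a) (ext_renaming newf oldf P K a id e)"
    and "inj_on (ext_renaming newf oldf P K a id e) (insert e (names P))"
    by simp_all
qed

lemma rename_delta_ext_renaming:
  assumes AS: "abstract_setting canon alpha newf oldf" and inf: "infinite (UNIV :: 'e set)"
    and wf: "wf_poset (Q :: ('e,'a) poset)" and wf_delta: "wf_poset (delta Q K e a)"
    and K: "K \<subseteq> evs Q" and e: "e \<notin> names Q"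
    and inj: "inj_on \<beta> (names Q)" and P: "rename_poset Q \<beta> = P" and canon: "canon P = P"
  shows "inj_on (ext_renaming newf oldf P (lift \<beta> ` K) a \<beta> e) (insert e (names Q))"
    and "rename_poset (delta Q K e a) (ext_renaming newf oldf P (lift \<beta> ` K) a \<beta> e)
           = delta_abs canon P (lift \<beta> ` K) a"
    and "canon (delta_abs canon P (lift \<beta> ` K) a) = delta_abs canon P (lift \<beta> ` K) a"
proof -
  define K' where "K' = lift \<beta> ` K"
  define e0 where "e0 = (SOME e. e \<notin> names P)"
  define \<gamma> where "\<gamma> = \<beta>(e := e0)"
  define \<theta> where "\<theta> = ext_renaming newf oldf P K' a id e0"
  define D where "D = delta P K' e0 a"
  have wfP: "wf_poset P" using wf_rename_poset[OF wf inj] P by simp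
  have e0: "e0 \<notin> names P" unfolding e0_def using ex_fresh_name[OF inf wfP] by (rule someI_ex)
  then have e0': "e0 \<notin> \<beta> ` names Q" using P by auto
  have inj\<gamma>: "inj_on \<gamma> (insert e (names Q))"
    using inj e e0' unfolding \<gamma>_def by (auto simp: inj_on_def)
  have agree: "\<forall>x\<in>names Q. \<gamma> x = \<beta> x" using e unfolding \<gamma>_def by simp
  have \<gamma>_image: "rename_poset (delta Q K e a) \<gamma> = D"
    unfolding rename_poset_delta[OF wf K e inj\<gamma>] rename_poset_cong[OF wf agree]
      image_lift_cong[OF K agree] P D_def K'_def by (simp add: \<gamma>_def)
  have wfD: "wf_poset D" using wf_rename_poset[OF wf_delta] inj\<gamma> \<gamma>_image by (metis names_delta)
  have K': "K' \<subseteq> evs P" using K P unfolding K'_def by auto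
  have delta_abs_D: "delta_abs canon P K' a = canon D" unfolding delta_abs_def D_def e0_def ..
  note D_canon = delta_abs_eq_rename[OF AS wfP canon K' e0 wfD[unfolded D_def]
      canon_iso(1)[OF AS wfD, folded delta_abs_D], folded \<theta>_def D_def]
  show "canon (delta_abs canon P (lift \<beta> ` K) a) = delta_abs canon P (lift \<beta> ` K) a"
    using canon_idem[OF AS wfD] delta_abs_D unfolding K'_def by simp
  have comp: "\<forall>x\<in>names (delta Q K e a). (\<theta> \<circ> \<gamma>) x = ext_renaming newf oldf P K' a \<beta> e x"
    using e e0' unfolding \<theta>_def \<gamma>_def by (auto simp: ext_renaming_def)
  have "\<gamma> ` insert e (names Q) = insert e0 (names P)"
    using \<gamma>_image unfolding D_def by (metis names_delta names_rename_poset)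
  then have "inj_on (\<theta> \<circ> \<gamma>) (insert e (names Q))"
    using comp_inj_on[OF inj\<gamma>] D_canon(2) by simp
  moreover have "inj_on (\<theta> \<circ> \<gamma>) (insert e (names Q))
      = inj_on (ext_renaming newf oldf P K' a \<beta> e) (insert e (names Q))"
    by (rule inj_on_cong) (use comp in auto)
  ultimately show "inj_on (ext_renaming newf oldf P (lift \<beta> ` K) a \<beta> e) (insert e (names Q))"
    unfolding K'_def by simp
  have "delta_abs canon P K' a = rename_poset D \<theta>" by (rule D_canon(1))
  also have "\<dots> = rename_poset (delta Q K e a) (\<theta> \<circ> \<gamma>)"
    unfolding \<gamma>_image[symmetric] rename_poset_comp ..
  finally show "rename_poset (delta Q K e a) (ext_renaming newf oldf P (lift \<beta> ` K) a \<beta> e)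
      = delta_abs canon P (lift \<beta> ` K) a"
    unfolding rename_poset_cong[OF wf_delta comp] K'_def by (rule sym)
qed

lemma rename_poset_factor:
  assumes wf: "wf_poset Q" and inj: "inj_on \<beta> (names Q)" and inj': "inj_on \<gamma> (names Q')"
    and eq: "rename_poset Q' \<gamma> = rename_poset Q \<beta>"
  obtains \<rho> where "inj_on \<rho> (names Q')" "rename_poset Q' \<rho> = Q" "\<forall>x\<in>names Q'. \<beta> (\<rho> x) = \<gamma> x"
proof
  define \<iota> where "\<iota> = inv_into (names Q) \<beta>"
  have \<gamma>_into: "\<gamma> x \<in> \<beta> ` names Q" if "x \<in> names Q'" for x
    using that eq names_rename_poset by (metis imageI)
  show \<beta>_\<rho>: "\<forall>x\<in>names Q'. \<beta> ((\<iota> \<circ> \<gamma>) x) = \<gamma> x"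
    using \<gamma>_into unfolding \<iota>_def by (simp add: f_inv_into_f)
  show "inj_on (\<iota> \<circ> \<gamma>) (names Q')"
    using inj' \<beta>_\<rho> unfolding inj_on_def by metis
  have "\<forall>x\<in>names Q. (\<iota> \<circ> \<beta>) x = x" using inj by (simp add: \<iota>_def)
  then show "rename_poset Q' (\<iota> \<circ> \<gamma>) = Q"
    by (metis eq rename_poset_comp rename_poset_id_on[OF wf])
qed

lemma rename_inject:
  assumes "pmarking S Q c" "pmarking S Q d" "inj_on \<beta> (names Q)" "rename c \<beta> = rename d \<beta>"
  shows "c = d"
proof -
  have "\<forall>x\<in>names Q. (inv_into (names Q) \<beta> \<circ> \<beta>) x = x" using assms(3) by simp
  then show ?thesis
    using rename_id_on[OF assms(1)] rename_id_on[OF assms(2)] assms(4) by (metis rename_comp)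
qed

lemma stepAC_iff:
  "stepAC S T F l canon alpha newf oldf P c lab P' c' \<longleftrightarrow>
    (\<exists>Q c0 K e a Q1 c1. stepC S T F l Q c0 (K, e, a) Q1 c1 \<and> P = canon Q
       \<and> c = rename c0 (alpha Q) \<and> lab = (lift (alpha Q) ` K, a)
       \<and> P' = delta_abs canon P (lift (alpha Q) ` K) a
       \<and> c' = rename c1 (ext_renaming newf oldf P (lift (alpha Q) ` K) a (alpha Q) e))"
  unfolding stepAC_def ext_renaming_def by metis

lemma stepAC_of_stepC:
  assumes AS: "abstract_setting canon alpha newf oldf" and inf: "infinite (UNIV :: 'e set)"
    and step: "stepC S T F l (Q :: ('e,'a) poset) c (K, e, a) Q' c'"
    and inj: "inj_on \<beta> (names Q)" and P: "rename_poset Q \<beta> = P" and canon: "canon P = P"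
  shows "stepAC S T F l canon alpha newf oldf P (rename c \<beta>) (lift \<beta> ` K, a)
           (delta_abs canon P (lift \<beta> ` K) a)
           (rename c' (ext_renaming newf oldf P (lift \<beta> ` K) a \<beta> e))"
proof -
  note step_facts = stepC_D[OF step]
  have wf: "wf_poset Q" using step_facts(1) by (simp add: pmarking_def)
  have wfP: "wf_poset P" using wf_rename_poset[OF wf inj] P by simp
  note P_canon = canon_iso(2,3)[OF AS wfP, unfolded canon]
  obtain \<sigma> where inj\<sigma>: "inj_on \<sigma> (names Q)" and \<sigma>_image: "rename_poset Q \<sigma> = P"
    and alpha_\<sigma>: "\<forall>x\<in>names Q. alpha P (\<sigma> x) = \<beta> x"
    using rename_poset_factor[OF wfP P_canon(2) inj] P P_canon(1) by metis
  obtain e0 where "e0 \<notin> names P" using ex_fresh_name[OF inf wfP] by blast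
  then have fresh: "e0 \<notin> \<sigma> ` names Q" using \<sigma>_image by auto
  have c_eq: "rename c \<beta> = rename (rename c \<sigma>) (alpha P)"
    unfolding rename_comp using rename_cong[OF step_facts(1) alpha_\<sigma>] by (simp add: comp_def)
  have K_eq: "lift \<beta> ` K = lift (alpha P) ` lift \<sigma> ` K"
    unfolding image_lift_comp using image_lift_cong[OF step_facts(4) alpha_\<sigma>] by (simp add: comp_def)
  have "\<forall>x\<in>names Q'. (ext_renaming newf oldf P (lift \<beta> ` K) a (alpha P) e0 \<circ> \<sigma>(e := e0)) x
      = ext_renaming newf oldf P (lift \<beta> ` K) a \<beta> e x"
    using step_facts(5) by (intro ballI ext_renaming_comp[OF step_facts(3) fresh alpha_\<sigma>]) simp
  then have c'_eq: "rename c' (ext_renaming newf oldf P (lift \<beta> ` K) a \<beta> e)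
      = rename (rename c' (\<sigma>(e := e0))) (ext_renaming newf oldf P (lift \<beta> ` K) a (alpha P) e0)"
    unfolding rename_comp using rename_cong[OF step_facts(2)] by metis
  have step_P: "stepC S T F l P (rename c \<sigma>) (lift \<sigma> ` K, e0, a)
      (rename_poset Q' (\<sigma>(e := e0))) (rename c' (\<sigma>(e := e0)))"
    using stepC_rename[OF step inj\<sigma> fresh] unfolding \<sigma>_image .
  show ?thesis
    unfolding stepAC_iff
    by (rule exI[of _ P], rule exI[of _ "rename c \<sigma>"], rule exI[of _ "lift \<sigma> ` K"],
        rule exI[of _ e0], rule exI[of _ a], rule exI[of _ "rename_poset Q' (\<sigma>(e := e0))"],
        rule exI[of _ "rename c' (\<sigma>(e := e0))"])
       (use step_P canon c_eq K_eq c'_eq in simp)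
qed

lemma stepC_of_stepAC:
  assumes AS: "abstract_setting canon alpha newf oldf"
    and step: "stepAC S T F l canon alpha newf oldf P (rename c \<beta>) (K', a) P' c'"
    and inj: "inj_on \<beta> (names Q)" and P: "rename_poset Q \<beta> = P"
    and pm: "pmarking S Q c" and fresh: "e \<notin> names Q"
  obtains K c0 where "stepC S T F l Q c (K, e, a) (delta Q K e a) c0" "K' = lift \<beta> ` K"
    "P' = delta_abs canon P K' a" "c' = rename c0 (ext_renaming newf oldf P K' a \<beta> e)"
proof -
  from step obtain Q1 c1 K1 e1 Q2 c2 where step1: "stepC S T F l Q1 c1 (K1, e1, a) Q2 c2"
    and P1: "P = canon Q1" and c1: "rename c \<beta> = rename c1 (alpha Q1)"
    and K1: "K' = lift (alpha Q1) ` K1" and P': "P' = delta_abs canon P K' a"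
    and c2: "c' = rename c2 (ext_renaming newf oldf P K' a (alpha Q1) e1)"
    unfolding stepAC_iff by auto
  note step_facts = stepC_D[OF step1]
  have wf: "wf_poset Q" using pm by (simp add: pmarking_def)
  have wf1: "wf_poset Q1" using step_facts(1) by (simp add: pmarking_def)
  note Q1_canon = canon_iso(2,3)[OF AS wf1, folded P1]
  obtain \<rho> where inj\<rho>: "inj_on \<rho> (names Q1)" and \<rho>_image: "rename_poset Q1 \<rho> = Q"
    and \<beta>_\<rho>: "\<forall>x\<in>names Q1. \<beta> (\<rho> x) = alpha Q1 x"
    using rename_poset_factor[OF wf inj Q1_canon(2)] P Q1_canon(1) by metis
  have "rename (rename c1 \<rho>) \<beta> = rename c \<beta>"
    unfolding c1 rename_comp using rename_cong[OF step_facts(1)] \<beta>_\<rho> by (simp add: comp_def)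
  then have c1_image: "rename c1 \<rho> = c"
    using rename_inject pmarking_rename[OF step_facts(1) inj\<rho>] \<rho>_image pm inj by metis
  have fresh': "e \<notin> \<rho> ` names Q1" using fresh \<rho>_image by auto
  have step_Q: "stepC S T F l Q c (lift \<rho> ` K1, e, a)
      (rename_poset Q2 (\<rho>(e1 := e))) (rename c2 (\<rho>(e1 := e)))"
    using stepC_rename[OF step1 inj\<rho> fresh'] unfolding \<rho>_image c1_image .
  show ?thesis
  proof (rule that)
    show "stepC S T F l Q c (lift \<rho> ` K1, e, a) (delta Q (lift \<rho> ` K1) e a) (rename c2 (\<rho>(e1 := e)))"
      using step_Q stepC_D(5)[OF step_Q] by simp
    show "K' = lift \<beta> ` lift \<rho> ` K1"
      unfolding K1 image_lift_comp using image_lift_cong[OF step_facts(4) \<beta>_\<rho>] by (simp add: comp_def)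
    show "P' = delta_abs canon P K' a" by (rule P')
    have "\<forall>x\<in>names Q2. (ext_renaming newf oldf P K' a \<beta> e \<circ> \<rho>(e1 := e)) x
        = ext_renaming newf oldf P K' a (alpha Q1) e1 x"
      using step_facts(5) by (intro ballI ext_renaming_comp[OF step_facts(3) fresh' \<beta>_\<rho>]) simp
    then show "c' = rename (rename c2 (\<rho>(e1 := e))) (ext_renaming newf oldf P K' a \<beta> e)"
      unfolding c2 rename_comp using rename_cong[OF step_facts(2)] by metis
  qed
qed

lemma simAC_D:
  "simAC S T F l canon alpha newf oldf P d1 d2 \<Longrightarrow>
   canon P = P \<and> pmarking S P d1 \<and> pmarking S P d2"
  unfolding simAC_def bisimAC_def by blast

lemma simAC_match:
  "simAC S T F l canon alpha newf oldf P d1 d2 \<Longrightarrow>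
   stepAC S T F l canon alpha newf oldf P d1 lab P' d1' \<Longrightarrow>
   \<exists>d2'. stepAC S T F l canon alpha newf oldf P d2 lab P' d2'
     \<and> simAC S T F l canon alpha newf oldf P' d1' d2'"
  unfolding simAC_def bisimAC_def by blast

lemma simAC_sym:
  "simAC S T F l canon alpha newf oldf P d1 d2 \<Longrightarrow> simAC S T F l canon alpha newf oldf P d2 d1"
proof -
  assume "simAC S T F l canon alpha newf oldf P d1 d2"
  then obtain R where "bisimAC S T F l canon alpha newf oldf R" "(d1, d2) \<in> R P"
    unfolding simAC_def by blast
  moreover from this have "bisimAC S T F l canon alpha newf oldf (\<lambda>P. (R P)\<inverse>)"
    unfolding bisimAC_def by fastforce
  ultimately show ?thesis unfolding simAC_def by blast
qed

lemma simAC_coinduct: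
  assumes "X P d1 d2"
    and sym: "\<And>P d1 d2. X P d1 d2 \<Longrightarrow> X P d2 d1"
    and pmarking: "\<And>P d1 d2. X P d1 d2 \<Longrightarrow> canon P = P \<and> pmarking S P d1"
    and step: "\<And>P d1 d2 lab P' d1'. X P d1 d2 \<Longrightarrow>
       stepAC S T F l canon alpha newf oldf P d1 lab P' d1' \<Longrightarrow>
       \<exists>d2'. stepAC S T F l canon alpha newf oldf P d2 lab P' d2' \<and> X P' d1' d2'"
  shows "simAC S T F l canon alpha newf oldf P d1 d2"
proof -
  have "bisimAC S T F l canon alpha newf oldf (\<lambda>P. {(d1, d2). X P d1 d2})"
    unfolding bisimAC_def using sym pmarking step by (simp (no_asm)) metis
  with assms(1) show ?thesis unfolding simAC_def by blast
qed

lemma simC_stepAC_match: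
  assumes AS: "abstract_setting canon alpha newf oldf" and inf: "infinite (UNIV :: 'e set)"
    and sim: "simC S T F l (P :: ('e,'a) poset) d1 d2" and canon: "canon P = P"
    and step: "stepAC S T F l canon alpha newf oldf P d1 lab P' d1'"
  shows "\<exists>d2'. stepAC S T F l canon alpha newf oldf P d2 lab P' d2'
           \<and> canon P' = P' \<and> simC S T F l P' d1' d2'"
proof -
  obtain K a where lab: "lab = (K, a)" by (cases lab)
  have pm: "pmarking S P d1" using simC_pmarking[OF sim] by blast
  then have wf: "wf_poset P" by (simp add: pmarking_def)
  obtain e where fresh: "e \<notin> names P" using ex_fresh_name[OF inf wf] by blast
  have "stepAC S T F l canon alpha newf oldf P (rename d1 id) (K, a) P' d1'" using step lab by simp
  from stepC_of_stepAC[OF AS this inj_on_id rename_poset_id pm fresh]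
  obtain K0 c1' where step1: "stepC S T F l P d1 (K0, e, a) (delta P K0 e a) c1'"
    and "K = lift id ` K0" and P': "P' = delta_abs canon P K a"
    and d1': "d1' = rename c1' (ext_renaming newf oldf P K a id e)" .
  then have step1: "stepC S T F l P d1 (K, e, a) (delta P K e a) c1'" by simp
  from simC_match[OF sim step1] obtain c2' where step2: "stepC S T F l P d2 (K, e, a) (delta P K e a) c2'"
    and sim': "simC S T F l (delta P K e a) c1' c2'"
    by blast
  note step_facts = stepC_D[OF step1]
  have wf': "wf_poset (delta P K e a)" using step_facts(2) by (simp add: pmarking_def)
  note ext = rename_delta_ext_renaming[OF AS inf wf wf' step_facts(4) fresh inj_on_id
      rename_poset_id canon, unfolded lift_id image_id]
  have "stepAC S T F l canon alpha newf oldf P d2 lab P'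
      (rename c2' (ext_renaming newf oldf P K a id e))"
    using stepAC_of_stepC[OF AS inf step2 inj_on_id rename_poset_id canon] lab P' by simp
  moreover have "names (delta P K e a) = insert e (names P)" by simp
  with ext(1) have "inj_on (ext_renaming newf oldf P K a id e) (names (delta P K e a))" by simp
  from simC_rename[OF inf this sim'] ext(2)
  have "simC S T F l P' d1' (rename c2' (ext_renaming newf oldf P K a id e))"
    unfolding P' d1' by simp
  ultimately show ?thesis using ext(3) P' by auto
qed

lemma simAC_stepC_match:
  assumes AS: "abstract_setting canon alpha newf oldf" and inf: "infinite (UNIV :: 'e set)"
    and inj: "inj_on \<beta> (names Q)"
    and sim: "simAC S T F l canon alpha newf oldf (rename_poset Q \<beta>) (rename c1 \<beta>) (rename c2 \<beta>)"
    and pm2: "pmarking S Q c2" and step: "stepC S T F l (Q :: ('e,'a) poset) c1 lab Q' c1'"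
  shows "\<exists>c2' \<beta>'. stepC S T F l Q c2 lab Q' c2' \<and> inj_on \<beta>' (names Q')
           \<and> simAC S T F l canon alpha newf oldf (rename_poset Q' \<beta>') (rename c1' \<beta>') (rename c2' \<beta>')"
proof -
  obtain K e a where lab: "lab = (K, e, a)" by (cases lab)
  define P where "P = rename_poset Q \<beta>"
  define \<beta>' where "\<beta>' = ext_renaming newf oldf P (lift \<beta> ` K) a \<beta> e"
  have canon: "canon P = P" using simAC_D[OF sim] unfolding P_def by blast
  have step1: "stepC S T F l Q c1 (K, e, a) Q' c1'" using step lab by simp
  note step_facts = stepC_D[OF step1]
  have wf: "wf_poset Q" and wf': "wf_poset Q'" using step_facts(1,2) by (simp_all add: pmarking_def)
  note ext = rename_delta_ext_renaming[OF AS inf wf wf'[unfolded step_facts(5)] step_facts(4,3) inj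
      P_def[symmetric] canon, folded step_facts(5) \<beta>'_def]
  have "stepAC S T F l canon alpha newf oldf P (rename c1 \<beta>) (lift \<beta> ` K, a)
      (delta_abs canon P (lift \<beta> ` K) a) (rename c1' \<beta>')"
    using stepAC_of_stepC[OF AS inf step1 inj P_def[symmetric] canon] unfolding \<beta>'_def .
  from simAC_match[OF sim[folded P_def] this]
  obtain d2' where step_abs: "stepAC S T F l canon alpha newf oldf P (rename c2 \<beta>) (lift \<beta> ` K, a)
        (delta_abs canon P (lift \<beta> ` K) a) d2'"
    and sim': "simAC S T F l canon alpha newf oldf (delta_abs canon P (lift \<beta> ` K) a)
        (rename c1' \<beta>') d2'"
    by blast
  from stepC_of_stepAC[OF AS step_abs inj P_def[symmetric] pm2 step_facts(3)]
  obtain K2 c2' where step2: "stepC S T F l Q c2 (K2, e, a) (delta Q K2 e a) c2'"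
    and K2: "lift \<beta> ` K = lift \<beta> ` K2" and d2': "d2' = rename c2' \<beta>'"
    unfolding \<beta>'_def by blast
  have "K2 = K"
    using K2 inj_on_lift[OF inj wf] step_facts(4) stepC_D(4)[OF step2]
    by (simp add: inj_on_image_eq_iff)
  with step2 have "stepC S T F l Q c2 lab Q' c2'" using lab step_facts(5) by simp
  moreover have "names Q' = insert e (names Q)" using step_facts(5) by simp
  with ext(1) have "inj_on \<beta>' (names Q')" by simp
  ultimately show ?thesis using sim'[folded ext(2)] d2' by blast
qed

lemma simC_imp_simAC:
  assumes AS: "abstract_setting canon alpha newf oldf" and inf: "infinite (UNIV :: 'e set)"
    and sim: "simC S T F l (Q :: ('e,'a) poset) c1 c2"
  shows "simAC S T F l canon alpha newf oldf (canon Q) (rename c1 (alpha Q)) (rename c2 (alpha Q))"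
proof (rule simAC_coinduct[where X = "\<lambda>P d1 d2. canon P = P \<and> simC S T F l P d1 d2"])
  have wf: "wf_poset Q" using simC_pmarking[OF sim] by (simp add: pmarking_def)
  show "canon (canon Q) = canon Q \<and> simC S T F l (canon Q) (rename c1 (alpha Q)) (rename c2 (alpha Q))"
    using canon_idem[OF AS wf] simC_rename[OF inf canon_iso(3)[OF AS wf] sim] canon_iso(2)[OF AS wf]
    by simp
next
  fix P d1 d2
  assume "canon P = P \<and> simC S T F l P d1 d2"
  then show "canon P = P \<and> simC S T F l P d2 d1" and "canon P = P \<and> pmarking S P d1"
    using simC_sym simC_pmarking by blast+
next
  fix P d1 d2 lab P' d1'
  assume "canon P = P \<and> simC S T F l P d1 d2"
    and "stepAC S T F l canon alpha newf oldf P d1 lab P' d1'"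
  then show "\<exists>d2'. stepAC S T F l canon alpha newf oldf P d2 lab P' d2'
      \<and> canon P' = P' \<and> simC S T F l P' d1' d2'"
    using simC_stepAC_match[OF AS inf] by blast
qed

text \<open>The isomorphism onto the abstract poset cannot be fixed to \<open>alpha\<close>: after a transition
  the isomorphism inherited from the source differs from \<open>alpha\<close> of the target in general.\<close>
lemma simAC_imp_simC:
  assumes AS: "abstract_setting canon alpha newf oldf" and inf: "infinite (UNIV :: 'e set)"
    and pm: "pmarking S (Q :: ('e,'a) poset) c1" "pmarking S Q c2"
    and sim: "simAC S T F l canon alpha newf oldf (canon Q) (rename c1 (alpha Q)) (rename c2 (alpha Q))"
  shows "simC S T F l Q c1 c2"
proof (rule simC_coinduct[where X = "\<lambda>Q c1 c2. pmarking S Q c1 \<and> pmarking S Q c2 \<and>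
    (\<exists>\<beta>. inj_on \<beta> (names Q) \<and>
      simAC S T F l canon alpha newf oldf (rename_poset Q \<beta>) (rename c1 \<beta>) (rename c2 \<beta>))"])
  have wf: "wf_poset Q" using pm by (simp add: pmarking_def)
  show "pmarking S Q c1 \<and> pmarking S Q c2 \<and> (\<exists>\<beta>. inj_on \<beta> (names Q) \<and>
      simAC S T F l canon alpha newf oldf (rename_poset Q \<beta>) (rename c1 \<beta>) (rename c2 \<beta>))"
    using pm sim canon_iso(2,3)[OF AS wf] by auto
next
  fix Q c1 c2
  assume "pmarking S Q c1 \<and> pmarking S Q c2 \<and> (\<exists>\<beta>. inj_on \<beta> (names Q) \<and>
      simAC S T F l canon alpha newf oldf (rename_poset Q \<beta>) (rename c1 \<beta>) (rename c2 \<beta>))"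
  then show "pmarking S Q c2 \<and> pmarking S Q c1 \<and> (\<exists>\<beta>. inj_on \<beta> (names Q) \<and>
      simAC S T F l canon alpha newf oldf (rename_poset Q \<beta>) (rename c2 \<beta>) (rename c1 \<beta>))"
    and "pmarking S Q c1"
    using simAC_sym by blast+
next
  fix Q c1 c2 lab Q' c1'
  assume "pmarking S Q c1 \<and> pmarking S Q c2 \<and> (\<exists>\<beta>. inj_on \<beta> (names Q) \<and>
      simAC S T F l canon alpha newf oldf (rename_poset Q \<beta>) (rename c1 \<beta>) (rename c2 \<beta>))"
    and step: "stepC S T F l Q c1 lab Q' c1'"
  then obtain c2' \<beta>' where step2: "stepC S T F l Q c2 lab Q' c2'" and "inj_on \<beta>' (names Q')"
    "simAC S T F l canon alpha newf oldf (rename_poset Q' \<beta>') (rename c1' \<beta>') (rename c2' \<beta>')"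
    using simAC_stepC_match[OF AS inf] by blast
  moreover have "pmarking S Q' c1'" "pmarking S Q' c2'"
    using step step2 stepC_D(2) by (metis prod_cases3)+
  ultimately show "\<exists>c2'. stepC S T F l Q c2 lab Q' c2' \<and> pmarking S Q' c1' \<and> pmarking S Q' c2' \<and>
      (\<exists>\<beta>. inj_on \<beta> (names Q') \<and>
        simAC S T F l canon alpha newf oldf (rename_poset Q' \<beta>) (rename c1' \<beta>) (rename c2' \<beta>))"
    by blast
qed

theorem theorem1:
  fixes S T :: "'n set" and F :: "('n \<times> 'n) set" and l :: "'n \<Rightarrow> 'a"
    and canon :: "('e,'a) poset \<Rightarrow> ('e,'a) poset"
    and alpha :: "('e,'a) poset \<Rightarrow> 'e \<Rightarrow> 'e"
    and newf :: "('e,'a) poset \<Rightarrow> ('e \<times> 'a) set \<Rightarrow> 'a \<Rightarrow> 'e"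
    and oldf :: "('e,'a) poset \<Rightarrow> ('e \<times> 'a) set \<Rightarrow> 'a \<Rightarrow> 'e \<Rightarrow> 'e"
    and Q :: "('e,'a) poset" and c1 c2 :: "('e,'a,'n) cmarking"
  assumes "infinite (UNIV :: 'e set)"
    and "is_net S T F"
    and "abstract_setting canon alpha newf oldf"
    and "pmarking S Q c1" and "pmarking S Q c2"
  shows "simC S T F l Q c1 c2 \<longleftrightarrow>
         simAC S T F l canon alpha newf oldf (canon Q) (rename c1 (alpha Q)) (rename c2 (alpha Q))"
  using simC_imp_simAC[OF assms(3,1)] simAC_imp_simC[OF assms(3,1,4,5)] by blast

end
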